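(* Let $S$ be a finite monoid. Then every almost pure $S$-act is absolutely pure.
   Context: Let $S$ be a monoid. A (right) $S$-act is a set $A$ with a map $A\times S\to A$, $(a,s)\mapsto as$, such that $a1=a$ and $a(st)=(as)t$. Given an $S$-act $A$ and a set $X$ of variables, an equation over $A$ is an expression of one of the forms $xs=yt$, $xs=xt$ or $xs=a$ with $x,y\in X$, $s,t\in S$, $a\in A$. If $A$ is a subact of $B$, a solution in $B$ of a set $\Sigma$ of such equations is a family $(b_x)_{x\in X}$ in $B$ with $b_xs=b_yt$ for each $xs=yt\in\Sigma$ and $b_xs=a$ for each $xs=a\in\Sigma$. $\Sigma$ is consistent if it has a solution in some $S$-act containing $A$ as a subact. $A$ is almost pure if every finite consistent set of equations over $A$ in one variable has a solution in $A$, and absolutely pure if every finite consistent set of equations over $A$ (in finitely many variables) has a solution in $A$. *)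

theory Defs
  imports Main
begin

definition is_act :: "'a set \<Rightarrow> ('a \<Rightarrow> 's::monoid_mult \<Rightarrow> 'a) \<Rightarrow> bool" where
  "is_act A act \<longleftrightarrow>
     (\<forall>a\<in>A. \<forall>s. act a s \<in> A) \<and>
     (\<forall>a\<in>A. act a 1 = a) \<and>
     (\<forall>a\<in>A. \<forall>s t. act a (s * t) = act (act a s) t)"

text \<open>Equations: EqVV x s y t is  x s = y t  (the form x s = x t is the case x = y);
  EqVC x s a is  x s = a.\<close>
datatype ('x, 's, 'a) eqn = EqVV 'x 's 'x 's | EqVC 'x 's 'a

fun eqn_vars :: "('x, 's, 'a) eqn \<Rightarrow> 'x set" where
  "eqn_vars (EqVV x s y t) = {x, y}"
| "eqn_vars (EqVC x s a) = {x}"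

fun eqn_consts :: "('x, 's, 'a) eqn \<Rightarrow> 'a set" where
  "eqn_consts (EqVV x s y t) = {}"
| "eqn_consts (EqVC x s a) = {a}"

definition eqns_over :: "'a set \<Rightarrow> 'x set \<Rightarrow> ('x, 's, 'a) eqn set \<Rightarrow> bool" where
  "eqns_over A X \<Sigma> \<longleftrightarrow> (\<forall>e\<in>\<Sigma>. eqn_vars e \<subseteq> X \<and> eqn_consts e \<subseteq> A)"

fun sat_eqn :: "('b \<Rightarrow> 's \<Rightarrow> 'b) \<Rightarrow> ('a \<Rightarrow> 'b) \<Rightarrow> ('x \<Rightarrow> 'b) \<Rightarrow> ('x, 's, 'a) eqn \<Rightarrow> bool" where
  "sat_eqn actB emb sol (EqVV x s y t) \<longleftrightarrow> actB (sol x) s = actB (sol y) t"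
| "sat_eqn actB emb sol (EqVC x s a) \<longleftrightarrow> actB (sol x) s = emb a"

definition solvable_in :: "'a set \<Rightarrow> ('a \<Rightarrow> 's \<Rightarrow> 'a) \<Rightarrow> 'x set \<Rightarrow> ('x, 's, 'a) eqn set \<Rightarrow> bool" where
  "solvable_in A act X \<Sigma> \<longleftrightarrow>
     (\<exists>sol. (\<forall>x\<in>X. sol x \<in> A) \<and> (\<forall>e\<in>\<Sigma>. sat_eqn act id sol e))"

text \<open>Consistency, relative to S-acts B whose elements live in the type 'b:
  there is an S-act B containing (an isomorphic copy emb ` A of) A as a subact
  in which Sigma has a solution.\<close>
definition consistent_in ::
  "'b itself \<Rightarrow> 'a set \<Rightarrow> ('a \<Rightarrow> 's::monoid_mult \<Rightarrow> 'a) \<Rightarrow> 'x set \<Rightarrow> ('x, 's, 'a) eqn set \<Rightarrow> bool" where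
  "consistent_in (_ :: 'b itself) A act X \<Sigma> \<longleftrightarrow>
     (\<exists>(B :: 'b set) actB emb sol.
        is_act B actB \<and> inj_on emb A \<and> emb ` A \<subseteq> B \<and>
        (\<forall>a\<in>A. \<forall>s. emb (act a s) = actB (emb a) s) \<and>
        (\<forall>x\<in>X. sol x \<in> B) \<and> (\<forall>e\<in>\<Sigma>. sat_eqn actB emb sol e))"

text \<open>Consistency is tested in S-acts with elements of type
  ('a + unit \<times> 's) set, which is large enough to hold the universal act
  (A together with the one-generator act on X \<times> S, modulo the congruence
  generated by Sigma); hence this is equivalent to consistency in an arbitrary act.\<close>
definition almost_pure :: "'a set \<Rightarrow> ('a \<Rightarrow> 's::monoid_mult \<Rightarrow> 'a) \<Rightarrow> bool" where
  "almost_pure A act \<longleftrightarrow>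
     (\<forall>\<Sigma> :: (unit, 's, 'a) eqn set.
        finite \<Sigma> \<and> eqns_over A UNIV \<Sigma> \<and>
        consistent_in TYPE(('a + unit \<times> 's) set) A act UNIV \<Sigma>
        \<longrightarrow> solvable_in A act UNIV \<Sigma>)"

definition absolutely_pure_wrt ::
  "'x itself \<Rightarrow> 'b itself \<Rightarrow> 'a set \<Rightarrow> ('a \<Rightarrow> 's::monoid_mult \<Rightarrow> 'a) \<Rightarrow> bool" where
  "absolutely_pure_wrt (_ :: 'x itself) (_ :: 'b itself) A act \<longleftrightarrow>
     (\<forall>(X :: 'x set) (\<Sigma> :: ('x, 's, 'a) eqn set).
        finite X \<and> finite \<Sigma> \<and> eqns_over A X \<Sigma> \<and>
        consistent_in TYPE('b) A act X \<Sigma>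
        \<longrightarrow> solvable_in A act X \<Sigma>)"

end

theory Submission
  imports Defs
begin

text \<open>Let a finite system be solved in an extension B of A, and let b be a value of the
  solution outside A.  Because S is finite, the one-variable equations over A that b satisfies
  form a finite consistent system, so almost purity yields c \<in> A satisfying all of them.  Then
  b s \<mapsto> c s is well defined on the cyclic subact bS and fixes A; collapsing bS onto cS this
  way turns B into an extension of A in which the image of the solution has strictly fewer
  values outside A.  Iterating over the finitely many variables moves the whole solution
  into A.\<close>

definition act_extension ::
  "'a set \<Rightarrow> ('a \<Rightarrow> 's::monoid_mult \<Rightarrow> 'a) \<Rightarrow> 'b set \<Rightarrow> ('b \<Rightarrow> 's \<Rightarrow> 'b) \<Rightarrow> ('a \<Rightarrow> 'b) \<Rightarrow> bool" where
  "act_extension A act B actB emb \<longleftrightarrow>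
     is_act B actB \<and> inj_on emb A \<and> emb ` A \<subseteq> B \<and>
     (\<forall>a\<in>A. \<forall>s. emb (act a s) = actB (emb a) s)"

definition solves ::
  "'b set \<Rightarrow> ('b \<Rightarrow> 's \<Rightarrow> 'b) \<Rightarrow> ('a \<Rightarrow> 'b) \<Rightarrow> 'x set \<Rightarrow> ('x, 's, 'a) eqn set \<Rightarrow> ('x \<Rightarrow> 'b) \<Rightarrow> bool"
where
  "solves B actB emb X \<Sigma> sol \<longleftrightarrow> (\<forall>x\<in>X. sol x \<in> B) \<and> (\<forall>e\<in>\<Sigma>. sat_eqn actB emb sol e)"

lemma consistent_in_iff:
  "consistent_in TYPE('b) A act X \<Sigma> \<longleftrightarrow>
     (\<exists>(B :: 'b set) actB emb sol. act_extension A act B actB emb \<and> solves B actB emb X \<Sigma> sol)"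
  unfolding consistent_in_def act_extension_def solves_def by blast

lemma act_closed: "is_act A act \<Longrightarrow> a \<in> A \<Longrightarrow> act a s \<in> A"
  and act_one: "is_act A act \<Longrightarrow> a \<in> A \<Longrightarrow> act a 1 = a"
  and act_mult: "is_act A act \<Longrightarrow> a \<in> A \<Longrightarrow> act a (s * t) = act (act a s) t"
  unfolding is_act_def by blast+

lemma is_act_subset:
  assumes "is_act B actB" "D \<subseteq> B" "\<And>d s. d \<in> D \<Longrightarrow> actB d s \<in> D"
  shows "is_act D actB"
  using assms unfolding is_act_def by blast

lemma is_act_image:
  assumes "is_act D actD" "inj_on f D"
  shows "is_act (f ` D) (\<lambda>p s. f (actD (inv_into D f p) s))"
  using assms unfolding is_act_def by auto

lemma sat_eqn_cong:
  assumes "\<And>x s. x \<in> eqn_vars e \<Longrightarrow> actB' (sol' x) s = f (actB (sol x) s)"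
    and "\<And>a. a \<in> eqn_consts e \<Longrightarrow> emb' a = f (emb a)"
    and "sat_eqn actB emb sol e"
  shows "sat_eqn actB' emb' sol' e"
  using assms by (cases e) auto

lemma consistent_in_transfer:
  fixes f :: "'b \<Rightarrow> 'c"
  assumes ext: "act_extension A act D actD emb" and sol: "solves D actD emb X \<Sigma> sol"
    and over: "eqns_over A X \<Sigma>" and inj: "inj_on f D"
  shows "consistent_in TYPE('c) A act X \<Sigma>"
  unfolding consistent_in_iff
proof (intro exI conjI)
  have embD: "emb ` A \<subseteq> D" using ext unfolding act_extension_def by blast
  show "act_extension A act (f ` D) (\<lambda>p s. f (actD (inv_into D f p) s)) (f \<circ> emb)"
    using ext inj embD unfolding act_extension_def
    by (auto simp: is_act_image comp_inj_on inj_on_subset)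
  show "solves (f ` D) (\<lambda>p s. f (actD (inv_into D f p) s)) (f \<circ> emb) X \<Sigma> (f \<circ> sol)"
    unfolding solves_def
  proof (intro conjI ballI)
    show "(f \<circ> sol) x \<in> f ` D" if "x \<in> X" for x using sol that unfolding solves_def by auto
    show "sat_eqn (\<lambda>p s. f (actD (inv_into D f p) s)) (f \<circ> emb) (f \<circ> sol) e" if e: "e \<in> \<Sigma>" for e
    proof (rule sat_eqn_cong[where f = f])
      show "sat_eqn actD emb sol e" using sol e unfolding solves_def by blast
      show "f (actD (inv_into D f ((f \<circ> sol) x)) s) = f (actD (sol x) s)" if "x \<in> eqn_vars e" for x s
      proof -
        have "sol x \<in> D" using that e over sol unfolding eqns_over_def solves_def by blast
        then show ?thesis using inj by simp
      qed
    qed simp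
  qed
qed

subsection \<open>Realizing a point of an extension inside A\<close>

definition point_eqns ::
  "'a set \<Rightarrow> ('b \<Rightarrow> 's \<Rightarrow> 'b) \<Rightarrow> ('a \<Rightarrow> 'b) \<Rightarrow> 'b \<Rightarrow> (unit, 's, 'a) eqn set" where
  "point_eqns A actB emb b =
     {EqVV () s () t | s t. actB b s = actB b t} \<union> {EqVC () s a | s a. a \<in> A \<and> actB b s = emb a}"

definition realizes ::
  "'a set \<Rightarrow> ('a \<Rightarrow> 's \<Rightarrow> 'a) \<Rightarrow> ('b \<Rightarrow> 's \<Rightarrow> 'b) \<Rightarrow> ('a \<Rightarrow> 'b) \<Rightarrow> 'b \<Rightarrow> 'a \<Rightarrow> bool" where
  "realizes A act actB emb b c \<longleftrightarrow>
     (\<forall>s t. actB b s = actB b t \<longrightarrow> act c s = act c t) \<and>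
     (\<forall>s a. a \<in> A \<longrightarrow> actB b s = emb a \<longrightarrow> act c s = a)"

lemma finite_point_eqns:
  fixes actB :: "'b \<Rightarrow> 's::finite \<Rightarrow> 'b"
  assumes "inj_on emb A"
  shows "finite (point_eqns A actB emb b)"
proof -
  have "{EqVV () s () t | s t. actB b s = actB b t} \<subseteq> range (\<lambda>(s, t). EqVV () s () t)"
    by auto
  then have "finite {EqVV () s () t | s t. actB b s = actB b t}"
    by (rule finite_subset) simp
  moreover have "{EqVC () s a | s a. a \<in> A \<and> actB b s = emb a}
      \<subseteq> range (\<lambda>s. EqVC () s (inv_into A emb (actB b s)))"
    using assms by auto
  then have "finite {EqVC () s a | s a. a \<in> A \<and> actB b s = emb a}"
    by (rule finite_subset) simp
  ultimately show ?thesis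
    unfolding point_eqns_def by simp
qed

lemma point_eqns_over: "eqns_over A UNIV (point_eqns A actB emb b)"
  unfolding point_eqns_def eqns_over_def by auto

lemma solves_point_eqns: "b \<in> B \<Longrightarrow> solves B actB emb UNIV (point_eqns A actB emb b) (\<lambda>_. b)"
  unfolding point_eqns_def solves_def by auto

lemma realizes_if_solvable_point_eqns:
  assumes "solvable_in A act UNIV (point_eqns A actB emb b)"
  obtains c where "c \<in> A" "realizes A act actB emb b c"
proof -
  obtain sol where "sol () \<in> A" and sat: "\<forall>e\<in>point_eqns A actB emb b. sat_eqn act id sol e"
    using assms unfolding solvable_in_def by blast
  moreover have "realizes A act actB emb b (sol ())"
    unfolding realizes_def
  proof (intro conjI allI impI)
    show "act (sol ()) s = act (sol ()) t" if "actB b s = actB b t" for s t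
    proof -
      have "EqVV () s () t \<in> point_eqns A actB emb b" using that unfolding point_eqns_def by blast
      then show ?thesis using sat by fastforce
    qed
    show "act (sol ()) s = a" if "a \<in> A" "actB b s = emb a" for s a
    proof -
      have "EqVC () s a \<in> point_eqns A actB emb b" using that unfolding point_eqns_def by blast
      then show ?thesis using sat by fastforce
    qed
  qed
  ultimately show ?thesis using that by blast
qed

lemma act_extension_orbit:
  assumes ext: "act_extension A act B actB emb" and b: "b \<in> B" and act: "is_act A act"
  shows "act_extension A act (emb ` A \<union> range (actB b)) actB emb"
proof -
  have isB: "is_act B actB" and embB: "emb ` A \<subseteq> B"
    and hom: "\<And>a s. a \<in> A \<Longrightarrow> emb (act a s) = actB (emb a) s"
    using ext unfolding act_extension_def by blast+
  have closed: "actB d s \<in> emb ` A \<union> range (actB b)" if "d \<in> emb ` A \<union> range (actB b)" for d s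
    using that
  proof
    assume "d \<in> emb ` A"
    then obtain a where "a \<in> A" "d = emb a" by blast
    then have "actB d s = emb (act a s)" and "act a s \<in> A" using hom act_closed[OF act] by simp_all
    then show ?thesis by blast
  next
    assume "d \<in> range (actB b)"
    then obtain t where "d = actB b t" by blast
    then have "actB d s = actB b (t * s)" using act_mult[OF isB b] by simp
    then show ?thesis by blast
  qed
  have "range (actB b) \<subseteq> B" using act_closed[OF isB b] by blast
  then have "is_act (emb ` A \<union> range (actB b)) actB"
    using is_act_subset[OF isB _ closed] embB by blast
  then show ?thesis using ext unfolding act_extension_def by blast
qed

text \<open>This coding embeds A \<union> bS into the type of test acts used in the definition of
  almost purity.\<close>
definition orbit_code ::
  "'a set \<Rightarrow> ('a \<Rightarrow> 'b) \<Rightarrow> ('b \<Rightarrow> 's \<Rightarrow> 'b) \<Rightarrow> 'b \<Rightarrow> 'b \<Rightarrow> ('a + unit \<times> 's) set" where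
  "orbit_code A emb actB b d = Inl ` {a\<in>A. emb a = d} \<union> Inr ` {((), s) | s. actB b s = d}"

lemma inj_on_orbit_code: "inj_on (orbit_code A emb actB b) (emb ` A \<union> range (actB b))"
proof (rule inj_onI)
  fix d d' assume "d \<in> emb ` A \<union> range (actB b)"
    and eq: "orbit_code A emb actB b d = orbit_code A emb actB b d'"
  then consider a where "a \<in> A" "d = emb a" | s where "d = actB b s" by blast
  then show "d = d'"
  proof cases
    case (1 a)
    then have "Inl a \<in> orbit_code A emb actB b d'" using eq unfolding orbit_code_def by blast
    then show ?thesis using 1 unfolding orbit_code_def by blast
  next
    case (2 s)
    then have "Inr ((), s) \<in> orbit_code A emb actB b d'" using eq unfolding orbit_code_def by blast
    then show ?thesis using 2 unfolding orbit_code_def by blast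
  qed
qed

lemma almost_pure_realizes:
  fixes actB :: "'b \<Rightarrow> 's::{monoid_mult, finite} \<Rightarrow> 'b"
  assumes act: "is_act A act" and ap: "almost_pure A act"
    and ext: "act_extension A act B actB emb" and b: "b \<in> B"
  obtains c where "c \<in> A" "realizes A act actB emb b c"
proof -
  have isB: "is_act B actB" and inj: "inj_on emb A" using ext unfolding act_extension_def by blast+
  have "actB b 1 \<in> range (actB b)" by (rule rangeI)
  then have bD: "b \<in> emb ` A \<union> range (actB b)" using act_one[OF isB b] by simp
  have "consistent_in TYPE(('a + unit \<times> 's) set) A act UNIV (point_eqns A actB emb b)"
    by (rule consistent_in_transfer[OF act_extension_orbit[OF ext b act]
        solves_point_eqns[OF bD] point_eqns_over inj_on_orbit_code[of A emb actB b]])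
  then have "solvable_in A act UNIV (point_eqns A actB emb b)"
    using ap finite_point_eqns[OF inj, of actB b] point_eqns_over[of A actB emb b]
    unfolding almost_pure_def by simp
  then show ?thesis by (rule realizes_if_solvable_point_eqns) (rule that)
qed

subsection \<open>Collapsing the orbit of a realized point\<close>

definition act_retraction :: "'b set \<Rightarrow> ('b \<Rightarrow> 's \<Rightarrow> 'b) \<Rightarrow> ('b \<Rightarrow> 'b) \<Rightarrow> bool" where
  "act_retraction B actB r \<longleftrightarrow>
     (\<forall>d\<in>B. r d \<in> B \<and> r (r d) = r d \<and> (\<forall>s. r (actB d s) = r (actB (r d) s)))"

lemma act_extension_retract:
  assumes act: "is_act A act" and ext: "act_extension A act B actB emb"
    and r: "act_retraction B actB r" and fix_A: "\<And>a. a \<in> A \<Longrightarrow> r (emb a) = emb a"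
  shows "act_extension A act (r ` B) (\<lambda>p s. r (actB p s)) emb"
proof -
  have isB: "is_act B actB" and embB: "emb ` A \<subseteq> B"
    and hom: "\<And>a s. a \<in> A \<Longrightarrow> emb (act a s) = actB (emb a) s"
    using ext unfolding act_extension_def by blast+
  have rB: "r ` B \<subseteq> B" using r unfolding act_retraction_def by blast
  have "is_act (r ` B) (\<lambda>p s. r (actB p s))"
    unfolding is_act_def
  proof (intro conjI ballI allI)
    fix p s assume "p \<in> r ` B"
    then show "r (actB p s) \<in> r ` B" using rB act_closed[OF isB] by blast
  next
    fix p assume "p \<in> r ` B"
    then show "r (actB p 1) = p" using rB act_one[OF isB] r unfolding act_retraction_def by auto
  next
    fix p s t assume "p \<in> r ` B"
    then have p: "p \<in> B" using rB by blast
    have "r (actB p (s * t)) = r (actB (actB p s) t)" using act_mult[OF isB p] by simp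
    also have "\<dots> = r (actB (r (actB p s)) t)"
      using r act_closed[OF isB p] unfolding act_retraction_def by blast
    finally show "r (actB p (s * t)) = r (actB (r (actB p s)) t)" .
  qed
  moreover have "emb ` A \<subseteq> r ` B" using embB fix_A by (metis image_subset_iff imageI)
  moreover have "emb (act a s) = r (actB (emb a) s)" if "a \<in> A" for a s
    using hom[OF that] fix_A[OF act_closed[OF act that]] by simp
  ultimately show ?thesis using ext unfolding act_extension_def by blast
qed

lemma solves_retract:
  assumes sol: "solves B actB emb X \<Sigma> sol" and over: "eqns_over A X \<Sigma>"
    and r: "act_retraction B actB r" and fix_A: "\<And>a. a \<in> A \<Longrightarrow> r (emb a) = emb a"
  shows "solves (r ` B) (\<lambda>p s. r (actB p s)) emb X \<Sigma> (r \<circ> sol)"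
  unfolding solves_def
proof (intro conjI ballI)
  show "(r \<circ> sol) x \<in> r ` B" if "x \<in> X" for x using sol that unfolding solves_def by auto
  show "sat_eqn (\<lambda>p s. r (actB p s)) emb (r \<circ> sol) e" if e: "e \<in> \<Sigma>" for e
  proof (rule sat_eqn_cong[where f = r])
    show "sat_eqn actB emb sol e" using sol e unfolding solves_def by blast
    show "r (actB ((r \<circ> sol) x) s) = r (actB (sol x) s)" if "x \<in> eqn_vars e" for x s
    proof -
      have "sol x \<in> B" using that e over sol unfolding eqns_over_def solves_def by blast
      then have "r (actB (sol x) s) = r (actB (r (sol x)) s)"
        using r unfolding act_retraction_def by blast
      then show ?thesis by simp
    qed
    show "emb a = r (emb a)" if "a \<in> eqn_consts e" for a
    proof -
      have "a \<in> A" using that e over unfolding eqns_over_def by blast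
      then show ?thesis using fix_A by simp
    qed
  qed
qed

text \<open>The choice made by SOME is irrelevant, since c satisfies every equation of b.\<close>
definition collapse ::
  "'a set \<Rightarrow> ('a \<Rightarrow> 's \<Rightarrow> 'a) \<Rightarrow> ('b \<Rightarrow> 's \<Rightarrow> 'b) \<Rightarrow> ('a \<Rightarrow> 'b) \<Rightarrow> 'b \<Rightarrow> 'a \<Rightarrow> 'b \<Rightarrow> 'b" where
  "collapse A act actB emb b c d =
     (if d \<in> emb ` A then d
      else if d \<in> range (actB b) then emb (act c (SOME s. actB b s = d))
      else d)"

lemma collapse_fixed: "d \<in> emb ` A \<Longrightarrow> collapse A act actB emb b c d = d"
  unfolding collapse_def by simp

context
  fixes A :: "'a set" and act :: "'a \<Rightarrow> 's::monoid_mult \<Rightarrow> 'a"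
    and B :: "'b set" and actB and emb and b and c
  assumes act: "is_act A act" and ext: "act_extension A act B actB emb"
    and b: "b \<in> B" and c: "c \<in> A" and realizes: "realizes A act actB emb b c"
begin

lemma collapse_orbit: "collapse A act actB emb b c (actB b s) = emb (act c s)"
proof (cases "actB b s \<in> emb ` A")
  case True
  then obtain a where "a \<in> A" "actB b s = emb a" by blast
  moreover then have "act c s = a" using realizes unfolding realizes_def by blast
  ultimately show ?thesis by (simp add: collapse_fixed)
next
  case False
  define s' where "s' = (SOME s'. actB b s' = actB b s)"
  have "actB b s' = actB b s" unfolding s'_def by (rule someI) (rule refl)
  then have "act c s' = act c s" using realizes unfolding realizes_def by blast
  then show ?thesis using False unfolding collapse_def s'_def by simp
qed

lemma collapse_point: "collapse A act actB emb b c b \<in> emb ` A"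
proof -
  have "is_act B actB" using ext unfolding act_extension_def by blast
  then have "collapse A act actB emb b c b = emb (act c 1)"
    using collapse_orbit[of 1] act_one[OF _ b] by metis
  then show ?thesis using act_closed[OF act c] by blast
qed

lemma act_retraction_collapse: "act_retraction B actB (collapse A act actB emb b c)"
proof -
  let ?r = "collapse A act actB emb b c"
  have isB: "is_act B actB" and embB: "emb ` A \<subseteq> B"
    and hom: "\<And>a s. a \<in> A \<Longrightarrow> emb (act a s) = actB (emb a) s"
    using ext unfolding act_extension_def by blast+
  have r_cases: "?r d \<in> emb ` A \<or> ?r d = d" for d
    unfolding collapse_def using act_closed[OF act c] by auto
  have r_act: "?r (actB d s) = ?r (actB (?r d) s)" for d s
  proof -
    consider "d \<in> emb ` A" | t where "d = actB b t" "d \<notin> emb ` A"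
      | "d \<notin> emb ` A" "d \<notin> range (actB b)" by blast
    then show ?thesis
    proof cases
      case 1
      then show ?thesis by (simp add: collapse_fixed)
    next
      case (2 t)
      have ct: "act c t \<in> A" and cts: "act (act c t) s \<in> A" using act_closed[OF act] c by blast+
      have "?r (actB d s) = ?r (actB b (t * s))" using 2(1) act_mult[OF isB b, of t s] by simp
      also have "\<dots> = emb (act (act c t) s)" using collapse_orbit act_mult[OF act c] by simp
      finally have "?r (actB d s) = emb (act (act c t) s)" .
      moreover have "actB (?r d) s = emb (act (act c t) s)"
        using 2(1) collapse_orbit hom[OF ct] by simp
      ultimately show ?thesis using cts collapse_fixed by (metis imageI)
    next
      case 3
      then show ?thesis unfolding collapse_def[of _ _ _ _ _ _ d] by simp
    qed
  qed
  have "?r d \<in> B" if "d \<in> B" for d using r_cases[of d] that embB by auto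
  moreover have "?r (?r d) = ?r d" for d using r_cases[of d] collapse_fixed by metis
  ultimately show ?thesis using r_act unfolding act_retraction_def by blast
qed

end

subsection \<open>Moving a solution into A\<close>

lemma solvable_in_if_solves_in_image:
  assumes act: "is_act A act" and ext: "act_extension A act B actB emb"
    and over: "eqns_over A X \<Sigma>" and sol: "solves B actB emb X \<Sigma> sol"
    and in_A: "\<And>x. x \<in> X \<Longrightarrow> sol x \<in> emb ` A"
  shows "solvable_in A act X \<Sigma>"
  unfolding solvable_in_def
proof (intro exI conjI ballI)
  have inj: "inj_on emb A"
    and hom: "\<And>a s. a \<in> A \<Longrightarrow> emb (act a s) = actB (emb a) s"
    using ext unfolding act_extension_def by blast+
  define sol' where "sol' x = inv_into A emb (sol x)" for x
  have sol'_A: "sol' x \<in> A" and emb_sol': "emb (sol' x) = sol x" if "x \<in> X" for x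
    using in_A[OF that] unfolding sol'_def by (auto intro: inv_into_into f_inv_into_f)
  show "sol' x \<in> A" if "x \<in> X" for x using sol'_A[OF that] .
  fix e assume e: "e \<in> \<Sigma>"
  show "sat_eqn act id sol' e"
  proof (rule sat_eqn_cong[where f = "inv_into A emb"])
    show "sat_eqn actB emb sol e" using sol e unfolding solves_def by blast
    show "act (sol' x) s = inv_into A emb (actB (sol x) s)" if "x \<in> eqn_vars e" for x s
    proof -
      have x: "x \<in> X" using that e over unfolding eqns_over_def by blast
      have "actB (sol x) s = emb (act (sol' x) s)" using hom[OF sol'_A[OF x]] emb_sol'[OF x] by simp
      then show ?thesis using inj act_closed[OF act sol'_A[OF x]] by simp
    qed
    show "id a = inv_into A emb (emb a)" if "a \<in> eqn_consts e" for a
    proof -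
      have "a \<in> A" using that e over unfolding eqns_over_def by blast
      then show ?thesis using inj by simp
    qed
  qed
qed

lemma solvable_in_if_solves_in_extension:
  fixes act :: "'a \<Rightarrow> 's::{monoid_mult, finite} \<Rightarrow> 'a"
  assumes act: "is_act A act" and ap: "almost_pure A act"
    and fin: "finite X" and over: "eqns_over A X \<Sigma>"
    and ext: "act_extension A act B actB emb" and sol: "solves B actB emb X \<Sigma> sol"
  shows "solvable_in A act X \<Sigma>"
  using ext sol
proof (induction "card {x\<in>X. sol x \<notin> emb ` A}" arbitrary: B actB sol rule: less_induct)
  case less
  show ?case
  proof (cases "\<forall>x\<in>X. sol x \<in> emb ` A")
    case True
    then show ?thesis
      using solvable_in_if_solves_in_image[OF act less.prems(1) over less.prems(2)] by blast
  next
    case False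
    then obtain x0 where x0: "x0 \<in> X" "sol x0 \<notin> emb ` A" by blast
    then have b: "sol x0 \<in> B" using less.prems(2) unfolding solves_def by blast
    obtain c where c: "c \<in> A" "realizes A act actB emb (sol x0) c"
      using almost_pure_realizes[OF act ap less.prems(1) b] by blast
    let ?r = "collapse A act actB emb (sol x0) c"
    have r: "act_retraction B actB ?r"
      using act_retraction_collapse[OF act less.prems(1) b c] .
    have fix_A: "?r (emb a) = emb a" if "a \<in> A" for a using that by (simp add: collapse_fixed)
    have "{x\<in>X. ?r (sol x) \<notin> emb ` A} \<subseteq> {x\<in>X. sol x \<notin> emb ` A} - {x0}"
    proof
      fix x assume "x \<in> {x\<in>X. ?r (sol x) \<notin> emb ` A}"
      then have x: "x \<in> X" and rx: "?r (sol x) \<notin> emb ` A" by blast+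
      have "sol x \<notin> emb ` A" using rx collapse_fixed by metis
      moreover have "x \<noteq> x0" using rx collapse_point[OF act less.prems(1) b c] by blast
      ultimately show "x \<in> {x\<in>X. sol x \<notin> emb ` A} - {x0}" using x by blast
    qed
    then have "card {x\<in>X. (?r \<circ> sol) x \<notin> emb ` A} \<le> card ({x\<in>X. sol x \<notin> emb ` A} - {x0})"
      using fin by (intro card_mono) auto
    also have "\<dots> < card {x\<in>X. sol x \<notin> emb ` A}"
      using fin x0 by (intro card_Diff1_less) auto
    finally have "card {x\<in>X. (?r \<circ> sol) x \<notin> emb ` A} < card {x\<in>X. sol x \<notin> emb ` A}" .
    then show ?thesis
      using less.hyps act_extension_retract[OF act less.prems(1) r fix_A]
        solves_retract[OF less.prems(2) over r fix_A] by blast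
  qed
qed

theorem mainTheorem2:
  fixes A :: "'a set" and act :: "'a \<Rightarrow> 's::{monoid_mult, finite} \<Rightarrow> 'a"
  assumes "is_act A act"
    and "almost_pure A act"
  shows "absolutely_pure_wrt TYPE('x) TYPE('b) A act"
  unfolding absolutely_pure_wrt_def consistent_in_iff
  using solvable_in_if_solves_in_extension[OF assms] by blast

end
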